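(* Let $X\subseteq[0,1]^n$ be closed and suppose $X$ has a rationally outgoing $k$-tangent $u$ at $x$, witnessed by a rational simplex $S\subseteq[0,1]^n$, a face $F$ of $S$ and $\lambda\in\mathbb{R}^k_{>0}$ with $C_{x,u,\lambda}\subseteq S$, $C_{x,u,\lambda}\not\subseteq F$, $F\cap X=S\cap X$. Let $f,g\in\mathcal{M}([0,1]^n)$ satisfy $f^{-1}(0)=F$ and $g^{-1}(0)=S$. Then $f|_X$ and $g|_X$ have the same zero set in $X$ (so $f|_X$ lies in a given maximal ideal of $\mathcal{M}(X)$ iff $g|_X$ does), but $f|_X$ does not belong to the principal ideal of $\mathcal{M}(X)$ generated by $g|_X$; i.e., there is no integer $m>0$ with $f|_X\le m\,g|_X$. Consequently $\mathcal{M}(X)$ is not strongly semisimple.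
   Context: $\mathcal{M}([0,1]^n)$ denotes the MV-algebra of continuous functions $[0,1]^n\to[0,1]$ that are piecewise affine linear with finitely many pieces having integer coefficients, with pointwise MV-operations; $\mathcal{M}(X)$ is the MV-algebra of their restrictions to $X$. The principal ideal generated by $a$ is $\{b\mid b\le ma\text{ for some integer }m>0\}$ ($ma$ is the $m$-fold truncated sum). Maximal ideals of $\mathcal{M}(X)$ are exactly $\{h\mid h(y)=0\}$, $y\in X$. Strong semisimplicity: every principal ideal is an intersection of maximal ideals. $k$-tangents: For pairwise orthogonal unit vectors $u=(u_1,\ldots,u_k)$ in $\mathbb{R}^n$, $\mathsf p_l$ the orthogonal projection onto $\mathbb{R}u_1+\cdots+\mathbb{R}u_l$ ($\mathsf p_0=0$), $u$ is a $k$-tangent of $X$ at $x$ if there is a sequence $x_i\in X$, $x_i\to x$, with $x_i-x\notin\mathbb{R}u_1+\cdots+\mathbb{R}u_k$, and $\lim_i \dfrac{x_i-x-\mathsf{p}_{l-1}(x_i-x)}{\|x_i-x-\mathsf{p}_{l-1}(x_i-x)\|}=u_l$ for $l=1,\ldots,k$. $C_{x,u,\lambda}=\mathrm{conv}(x,\,x+\lambda_1u_1,\,\ldots,\,x+\lambda_1u_1+\cdots+\lambda_ku_k)$. Rationally outgoing: there exist a rational simplex $S$, a face $F$ of $S$, and $\lambda\in\mathbb{R}^k_{>0}$ with $C_{x,u,\lambda}\subseteq S$, $C_{x,u,\lambda}\not\subseteq F$, $F\cap X=S\cap X$. *)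

theory Defs
  imports "HOL-Analysis.Analysis"
begin

definition unit_cube :: "(real^'n) set" where
  "unit_cube = cbox 0 1"

definition mcnaughton :: "(real^'n \<Rightarrow> real) \<Rightarrow> bool" where
  "mcnaughton f \<longleftrightarrow>
     continuous_on unit_cube f \<and> f ` unit_cube \<subseteq> {0..1} \<and>
     (\<exists>P :: ((real^'n) \<times> real) set. finite P \<and>
        (\<forall>(a,b)\<in>P. (\<forall>i. a $ i \<in> \<int>) \<and> b \<in> \<int>) \<and>
        (\<forall>y\<in>unit_cube. \<exists>(a,b)\<in>P. f y = a \<bullet> y + b))"

definition restr :: "(real^'n) set \<Rightarrow> (real^'n \<Rightarrow> real) \<Rightarrow> (real^'n \<Rightarrow> real)" where
  "restr X f = (\<lambda>y. if y \<in> X then f y else 0)"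

definition MX :: "(real^'n) set \<Rightarrow> (real^'n \<Rightarrow> real) set" where
  "MX X = {restr X f | f. mcnaughton f}"

definition mv_oplus :: "('a \<Rightarrow> real) \<Rightarrow> ('a \<Rightarrow> real) \<Rightarrow> ('a \<Rightarrow> real)" where
  "mv_oplus a b = (\<lambda>y. min 1 (a y + b y))"

fun mv_mult :: "nat \<Rightarrow> ('a \<Rightarrow> real) \<Rightarrow> ('a \<Rightarrow> real)" where
  "mv_mult 0 a = (\<lambda>y. 0)"
| "mv_mult (Suc m) a = mv_oplus a (mv_mult m a)"

definition mv_ideal :: "(real^'n) set \<Rightarrow> (real^'n \<Rightarrow> real) set \<Rightarrow> bool" where
  "mv_ideal X I \<longleftrightarrow> I \<subseteq> MX X \<and> (\<lambda>y. 0) \<in> I \<and>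
     (\<forall>a\<in>I. \<forall>b\<in>MX X. (\<forall>y\<in>X. b y \<le> a y) \<longrightarrow> b \<in> I) \<and>
     (\<forall>a\<in>I. \<forall>b\<in>I. mv_oplus a b \<in> I)"

definition maximal_mv_ideal :: "(real^'n) set \<Rightarrow> (real^'n \<Rightarrow> real) set \<Rightarrow> bool" where
  "maximal_mv_ideal X I \<longleftrightarrow> mv_ideal X I \<and> I \<noteq> MX X \<and>
     (\<forall>J. mv_ideal X J \<and> I \<subseteq> J \<longrightarrow> J = I \<or> J = MX X)"

definition principal_ideal :: "(real^'n) set \<Rightarrow> (real^'n \<Rightarrow> real) \<Rightarrow> (real^'n \<Rightarrow> real) set" where
  "principal_ideal X a = {b \<in> MX X. \<exists>m>0. \<forall>y\<in>X. b y \<le> mv_mult m a y}"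

text \<open>Strong semisimplicity: every principal ideal is an intersection of maximal ideals
  (the intersection is taken inside M(X), so the empty family gives M(X)).\<close>
definition strongly_semisimple :: "(real^'n) set \<Rightarrow> bool" where
  "strongly_semisimple X \<longleftrightarrow>
     (\<forall>a\<in>MX X. \<exists>\<M>. (\<forall>J\<in>\<M>. maximal_mv_ideal X J) \<and>
        principal_ideal X a = MX X \<inter> \<Inter>\<M>)"

definition rational_simplex :: "(real^'n) set \<Rightarrow> bool" where
  "rational_simplex S \<longleftrightarrow> (\<exists>V. finite V \<and> V \<noteq> {} \<and> \<not> affine_dependent V \<and>
     (\<forall>v\<in>V. \<forall>i. v $ i \<in> \<rat>) \<and> S = convex hull V)"

definition proj_l :: "(nat \<Rightarrow> real^'n) \<Rightarrow> nat \<Rightarrow> real^'n \<Rightarrow> real^'n" where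
  "proj_l u l v = (\<Sum>j=1..l. (v \<bullet> u j) *\<^sub>R u j)"

definition orthonormal_family :: "nat \<Rightarrow> (nat \<Rightarrow> real^'n) \<Rightarrow> bool" where
  "orthonormal_family k u \<longleftrightarrow> (\<forall>l\<in>{1..k}. norm (u l) = 1) \<and>
     (\<forall>l\<in>{1..k}. \<forall>l'\<in>{1..k}. l \<noteq> l' \<longrightarrow> u l \<bullet> u l' = 0)"

definition k_tangent :: "(real^'n) set \<Rightarrow> real^'n \<Rightarrow> nat \<Rightarrow> (nat \<Rightarrow> real^'n) \<Rightarrow> bool" where
  "k_tangent X x k u \<longleftrightarrow> orthonormal_family k u \<and>
     (\<exists>xs :: nat \<Rightarrow> real^'n. (\<forall>i. xs i \<in> X) \<and> xs \<longlonglongrightarrow> x \<and>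
        (\<forall>i. xs i - x \<notin> span (u ` {1..k})) \<and>
        (\<forall>l\<in>{1..k}. (\<lambda>i. (1 / norm (xs i - x - proj_l u (l - 1) (xs i - x))) *\<^sub>R
                            (xs i - x - proj_l u (l - 1) (xs i - x))) \<longlonglongrightarrow> u l))"

definition Ccone :: "real^'n \<Rightarrow> nat \<Rightarrow> (nat \<Rightarrow> real^'n) \<Rightarrow> (nat \<Rightarrow> real) \<Rightarrow> (real^'n) set" where
  "Ccone x k u lam = convex hull {x + (\<Sum>j=1..l. lam j *\<^sub>R u j) | l. l \<le> k}"

end

theory Submission
  imports Defs
begin

text \<open>Write the points of the tangent sequence \<open>x\<^sub>i \<rightarrow> x\<close> as \<open>x\<^sub>i = c\<^sub>i + r\<^sub>i\<close>, where \<open>c\<^sub>i\<close> is the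
  foot of \<open>x\<^sub>i\<close> on \<open>x + span u\<close>. The tangent conditions make the coordinates \<open>\<alpha>\<^sub>l\<close> of \<open>c\<^sub>i - x\<close>
  positive, of strictly decreasing orders of magnitude, and all of larger order than \<open>\<bar>r\<^sub>i\<bar>\<close>.
  Hence \<open>c\<^sub>i\<close> eventually lies in the relative interior of \<open>C\<^sub>x\<^sub>,\<^sub>u\<^sub>,\<^sub>\<lambda>\<close>, so in \<open>S\<close> but not in the
  face \<open>F\<close>: \<open>g(c\<^sub>i) = 0 < f(c\<^sub>i)\<close>. Along a subsequence \<open>f\<close> is one linear piece vanishing at \<open>x\<close>,
  so \<open>f(c\<^sub>i)\<close> is a combination of the \<open>\<alpha>\<^sub>l\<close> whose leading nonzero term has exact order \<open>\<alpha>\<^sub>l\<close>.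
  Since \<open>f\<close> and \<open>g\<close> are Lipschitz, \<open>f(x\<^sub>i) \<ge> f(c\<^sub>i) - O(\<bar>r\<^sub>i\<bar>)\<close> and \<open>g(x\<^sub>i) = O(\<bar>r\<^sub>i\<bar>)\<close>, so
  \<open>f(x\<^sub>i) > m g(x\<^sub>i)\<close> for large \<open>i\<close>. On the other hand \<open>f\<close> and \<open>g\<close> have the same zeros on the
  compact set \<open>X\<close>, so every maximal ideal containing \<open>g|\<^sub>X\<close> contains \<open>f|\<^sub>X\<close>.\<close>

section \<open>McNaughton functions and the algebra \<open>M(X)\<close>\<close>

lemma mv_mult_nonneg:
  assumes "0 \<le> h y"
  shows "mv_mult m h y = min 1 (real m * h y)"
  using assms by (induction m) (auto simp: mv_oplus_def algebra_simps min_def)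

lemma mv_ideal_mv_mult:
  assumes "mv_ideal X J" "a \<in> J"
  shows "mv_mult m a \<in> J"
  using assms by (induction m) (auto simp: mv_ideal_def)

lemma mcnaughton_range: "mcnaughton f \<Longrightarrow> y \<in> unit_cube \<Longrightarrow> 0 \<le> f y \<and> f y \<le> 1"
  unfolding mcnaughton_def by auto

lemma mcnaughton_const: "c \<in> \<int> \<Longrightarrow> 0 \<le> c \<Longrightarrow> c \<le> 1 \<Longrightarrow> mcnaughton (\<lambda>y. c)"
  unfolding mcnaughton_def
  by (intro conjI continuous_intros exI[of _ "{(0,c)}"]) auto

lemma mcnaughton_truncated_add:
  fixes f g :: "real^'n \<Rightarrow> real"
  assumes f: "mcnaughton f" and g: "mcnaughton g"
  shows "mcnaughton (\<lambda>y. min 1 (f y + g y))"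
proof -
  obtain P :: "((real^'n) \<times> real) set" where P: "finite P" "\<forall>(a,b)\<in>P. (\<forall>i. a $ i \<in> \<int>) \<and> b \<in> \<int>"
    "\<forall>y\<in>(unit_cube::(real^'n) set). \<exists>(a,b)\<in>P. f y = a \<bullet> y + b" using f unfolding mcnaughton_def by blast
  obtain Q :: "((real^'n) \<times> real) set" where Q: "finite Q" "\<forall>(a,b)\<in>Q. (\<forall>i. a $ i \<in> \<int>) \<and> b \<in> \<int>"
    "\<forall>y\<in>(unit_cube::(real^'n) set). \<exists>(a,b)\<in>Q. g y = a \<bullet> y + b" using g unfolding mcnaughton_def by blast
  define R where "R = insert (0,1) ((\<lambda>((a,b),(c,d)). (a+c, b+d)) ` (P \<times> Q))"
  have "finite R" using P Q by (simp add: R_def)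
  moreover have "\<forall>(a,b)\<in>R. (\<forall>i. a $ i \<in> \<int>) \<and> b \<in> \<int>"
    using P(2) Q(2) by (fastforce simp: R_def)
  moreover have "\<forall>y\<in>unit_cube. \<exists>(a,b)\<in>R. min 1 (f y + g y) = a \<bullet> y + b"
  proof
    fix y :: "real^'n" assume y: "y \<in> unit_cube"
    obtain a b where ab: "(a,b)\<in>P" "f y = a \<bullet> y + b" using P(3) y by blast
    obtain c d where cd: "(c,d)\<in>Q" "g y = c \<bullet> y + d" using Q(3) y by blast
    show "\<exists>(a,b)\<in>R. min 1 (f y + g y) = a \<bullet> y + b"
    proof (cases "f y + g y \<le> 1")
      case True
      then show ?thesis using ab cd
        by (intro bexI[of _ "(a+c,b+d)"])
          (auto simp: R_def inner_add_left intro!: image_eqI[of _ _ "((a,b),(c,d))"])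
    next
      case False then show ?thesis by (intro bexI[of _ "(0,1)"]) (auto simp: R_def)
    qed
  qed
  moreover have fc: "continuous_on unit_cube f" "f ` unit_cube \<subseteq> {0..1}"
    and gc: "continuous_on unit_cube g" "g ` unit_cube \<subseteq> {0..1}"
    using f g unfolding mcnaughton_def by auto
  moreover have "continuous_on unit_cube (\<lambda>y. min 1 (f y + g y))"
    using fc gc by (intro continuous_intros)
  moreover have "(\<lambda>y. min 1 (f y + g y)) ` unit_cube \<subseteq> {0..1}"
    using fc(2) gc(2) by (force simp: image_subset_iff)
  ultimately show ?thesis unfolding mcnaughton_def by (intro conjI exI[of _ R]) blast+
qed

lemma restr_in_MX: "mcnaughton f \<Longrightarrow> restr X f \<in> MX X"
  unfolding MX_def by blast

lemma MX_mv_oplus: "a \<in> MX X \<Longrightarrow> b \<in> MX X \<Longrightarrow> mv_oplus a b \<in> MX X"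
proof -
  assume "a \<in> MX X" "b \<in> MX X"
  then obtain f g where fg: "mcnaughton f" "mcnaughton g" "a = restr X f" "b = restr X g"
    unfolding MX_def by blast
  have "mv_oplus a b = restr X (\<lambda>y. min 1 (f y + g y))"
    by (auto simp: fg mv_oplus_def restr_def)
  then show ?thesis using restr_in_MX[OF mcnaughton_truncated_add[OF fg(1,2)]] by simp
qed

lemma MX_range: "X \<subseteq> unit_cube \<Longrightarrow> a \<in> MX X \<Longrightarrow> y \<in> X \<Longrightarrow> 0 \<le> a y \<and> a y \<le> 1"
  unfolding MX_def restr_def using mcnaughton_range by fastforce

lemma MX_zero: "(\<lambda>y. 0) \<in> MX X"
proof -
  have "restr X (\<lambda>y. 0) \<in> MX X" by (intro restr_in_MX mcnaughton_const) auto
  then show ?thesis by (simp add: restr_def)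
qed

section \<open>Lipschitz continuity of McNaughton functions\<close>

lemma finite_affine_crossings:
  fixes Q :: "(real \<times> real) set"
  assumes "finite Q"
  shows "finite (\<Union>q1\<in>Q. \<Union>q2\<in>Q - {q1}. {t. fst q1 * t + snd q1 = fst q2 * t + snd q2})"
proof (intro finite_UN_I assms finite_Diff)
  fix q1 q2 assume "q1 \<in> Q" "q2 \<in> Q - {q1}"
  then have ne: "q1 \<noteq> q2" by auto
  show "finite {t. fst q1 * t + snd q1 = fst q2 * t + snd q2}"
  proof (cases "fst q1 = fst q2")
    case True
    then have "snd q1 \<noteq> snd q2" using ne by (metis prod_eqI)
    then show ?thesis using True by simp
  next
    case False
    have "{t. fst q1 * t + snd q1 = fst q2 * t + snd q2} \<subseteq> {(snd q2 - snd q1) / (fst q1 - fst q2)}"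
      using False by (auto simp: field_simps)
    then show ?thesis using finite_subset by blast
  qed
qed

text \<open>Off the finitely many crossings of two pieces, \<open>\<phi>\<close> coincides near \<open>t\<close> with a single piece.\<close>

lemma piecewise_affine_has_vector_derivative:
  fixes \<phi> :: "real \<Rightarrow> real" and Q :: "(real \<times> real) set"
  assumes cont: "continuous_on {0..1} \<phi>" and fin: "finite Q"
    and pieces: "\<forall>t\<in>{0..1}. \<exists>q\<in>Q. \<phi> t = fst q * t + snd q"
    and t: "t \<in> {0<..<1}"
    and no_crossing: "t \<notin> (\<Union>q1\<in>Q. \<Union>q2\<in>Q - {q1}. {t. fst q1 * t + snd q1 = fst q2 * t + snd q2})"
    and q: "q \<in> Q" "\<phi> t = fst q * t + snd q"
  shows "(\<phi> has_vector_derivative fst q) (at t)"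
proof -
  define A where "A q' = {s \<in> {0..1}. \<phi> s = fst q' * s + snd q'}" for q'
  have "closed (A q')" for q'
  proof -
    have "closed {s \<in> {0..1}. \<phi> s - (fst q' * s + snd q') = 0}"
      by (intro continuous_closed_preimage_constant continuous_intros cont)
    then show ?thesis unfolding A_def by simp
  qed
  define U where "U = {0<..<1} - (\<Union>q'\<in>Q - {q}. A q')"
  have U: "open U" "t \<in> U"
    using \<open>\<And>q'. closed (A q')\<close> fin t q no_crossing unfolding U_def A_def
    by (auto intro!: open_Diff closed_UN)
  have on_U: "\<phi> s = fst q * s + snd q" if s: "s \<in> U" for s
  proof -
    have "s \<in> {0..1}" using s unfolding U_def by auto
    then obtain q' where "q' \<in> Q" "\<phi> s = fst q' * s + snd q'" using pieces by blast
    moreover have "s \<notin> A q'" if "q' \<in> Q - {q}" for q' using s that unfolding U_def by blast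
    ultimately show ?thesis using s unfolding U_def A_def by fastforce
  qed
  have "((\<lambda>s. fst q * s + snd q) has_vector_derivative fst q) (at t)"
    unfolding has_real_derivative_iff_has_vector_derivative[symmetric]
    by (auto intro!: derivative_eq_intros)
  then show ?thesis
    by (rule has_vector_derivative_transform_within_open[OF _ U]) (use on_U in auto)
qed

lemma continuous_piecewise_affine_increment_le:
  fixes \<phi> :: "real \<Rightarrow> real" and Q :: "(real \<times> real) set"
  assumes cont: "continuous_on {0..1} \<phi>" and fin: "finite Q"
    and pieces: "\<forall>t\<in>{0..1}. \<exists>q\<in>Q. \<phi> t = fst q * t + snd q"
    and slopes: "\<forall>q\<in>Q. \<bar>fst q\<bar> \<le> M"
  shows "\<bar>\<phi> 1 - \<phi> 0\<bar> \<le> M"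
proof -
  define P where "P t = (SOME q. q \<in> Q \<and> \<phi> t = fst q * t + snd q)" for t
  have P: "P t \<in> Q \<and> \<phi> t = fst (P t) * t + snd (P t)" if "t \<in> {0..1}" for t
    unfolding P_def by (rule someI_ex) (use pieces that in blast)
  have "((\<lambda>t. fst (P t)) has_integral (\<phi> 1 - \<phi> 0)) {0..1}"
  proof (rule fundamental_theorem_of_calculus_interior_strong[OF finite_affine_crossings[OF fin]])
    fix t assume "t \<in> {0<..<1} - (\<Union>q1\<in>Q. \<Union>q2\<in>Q - {q1}. {t. fst q1 * t + snd q1 = fst q2 * t + snd q2})"
    then show "(\<phi> has_vector_derivative fst (P t)) (at t)"
      using P[of t] by (intro piecewise_affine_has_vector_derivative[OF cont fin pieces]) auto
  qed (use cont in auto)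
  moreover have "0 \<le> M" using P[of 0] slopes by force
  ultimately have "norm (\<phi> 1 - \<phi> 0) \<le> M * Henstock_Kurzweil_Integration.content (cbox (0::real) 1)"
    by (intro has_integral_bound) (use P slopes in auto)
  then show ?thesis by simp
qed

lemma unit_cube_segment:
  assumes "y \<in> (unit_cube::(real^'n) set)" "z \<in> unit_cube" "t \<in> {0..1}"
  shows "z + t *\<^sub>R (y - z) \<in> unit_cube"
proof -
  have "(1 - t) *\<^sub>R z + t *\<^sub>R y \<in> unit_cube"
    using assms unfolding unit_cube_def by (intro convexD convex_box) auto
  moreover have "(1 - t) *\<^sub>R z + t *\<^sub>R y = z + t *\<^sub>R (y - z)" by (simp add: algebra_simps)
  ultimately show ?thesis by simp
qed

lemma mcnaughton_lipschitz:
  fixes h :: "real^'n \<Rightarrow> real"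
  assumes "mcnaughton h"
  obtains L where "\<And>y z. y \<in> unit_cube \<Longrightarrow> z \<in> unit_cube \<Longrightarrow> \<bar>h y - h z\<bar> \<le> L * norm (y - z)"
proof -
  obtain P :: "((real^'n) \<times> real) set" where P: "finite P"
    "\<forall>y\<in>(unit_cube::(real^'n) set). \<exists>(a,b)\<in>P. h y = a \<bullet> y + b"
    and hc: "continuous_on unit_cube h"
    using assms unfolding mcnaughton_def by blast
  define L where "L = (\<Sum>p\<in>P. norm (fst p))"
  have Lp: "norm (fst p) \<le> L" if "p \<in> P" for p
    unfolding L_def using P(1) that by (intro member_le_sum) auto
  have "\<bar>h y - h z\<bar> \<le> L * norm (y - z)" if y: "y \<in> unit_cube" and z: "z \<in> unit_cube" for y z
  proof -
    define \<phi> where "\<phi> t = h (z + t *\<^sub>R (y - z))" for t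
    define Q where "Q = (\<lambda>p. (fst p \<bullet> (y - z), fst p \<bullet> z + snd p)) ` P"
    have "continuous_on {0..1} \<phi>"
      unfolding \<phi>_def
      by (rule continuous_on_compose2[OF hc]) (auto intro!: continuous_intros unit_cube_segment y z)
    moreover have "finite Q" using P(1) by (simp add: Q_def)
    moreover have "\<forall>t\<in>{0..1}. \<exists>q\<in>Q. \<phi> t = fst q * t + snd q"
    proof
      fix t :: real assume t: "t \<in> {0..1}"
      obtain a b where ab: "(a,b) \<in> P" "h (z + t *\<^sub>R (y - z)) = a \<bullet> (z + t *\<^sub>R (y - z)) + b"
        using P(2) unit_cube_segment[OF y z t] by blast
      show "\<exists>q\<in>Q. \<phi> t = fst q * t + snd q"
        by (rule bexI[of _ "(a \<bullet> (y - z), a \<bullet> z + b)"])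
          (use ab in \<open>auto simp: \<phi>_def Q_def inner_add_right algebra_simps
             intro!: image_eqI[of _ _ "(a,b)"]\<close>)
    qed
    moreover have "\<forall>q\<in>Q. \<bar>fst q\<bar> \<le> L * norm (y - z)"
    proof
      fix q assume "q \<in> Q"
      then obtain p where p: "p \<in> P" "q = (fst p \<bullet> (y - z), fst p \<bullet> z + snd p)"
        unfolding Q_def by auto
      have "\<bar>fst p \<bullet> (y - z)\<bar> \<le> norm (fst p) * norm (y - z)" by (rule Cauchy_Schwarz_ineq2)
      also have "\<dots> \<le> L * norm (y - z)" using Lp[OF p(1)] by (intro mult_right_mono) auto
      finally show "\<bar>fst q\<bar> \<le> L * norm (y - z)" using p by simp
    qed
    ultimately have "\<bar>\<phi> 1 - \<phi> 0\<bar> \<le> L * norm (y - z)"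
      by (rule continuous_piecewise_affine_increment_le)
    then show ?thesis by (simp add: \<phi>_def)
  qed
  then show ?thesis using that by blast
qed

section \<open>Orthonormal families and tangent sequences\<close>

lemma orthonormal_family_inner:
  assumes "orthonormal_family k u" "j \<in> {1..k}" "l \<in> {1..k}"
  shows "u j \<bullet> u l = (if j = l then 1 else 0)"
  using assms unfolding orthonormal_family_def by (auto simp: dot_square_norm)

lemma inner_sum_orthonormal:
  assumes "orthonormal_family k u" "l \<le> k" "l' \<in> {1..k}"
  shows "(\<Sum>j=1..l. c j *\<^sub>R u j) \<bullet> u l' = (if l' \<le> l then c l' else 0)"
proof -
  have "(\<Sum>j=1..l. c j *\<^sub>R u j) \<bullet> u l' = (\<Sum>j=1..l. c j * (u j \<bullet> u l'))"
    by (simp add: inner_sum_left)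
  also have "\<dots> = (\<Sum>j=1..l. if j = l' then c j else 0)"
    using assms by (intro sum.cong refl) (auto simp: orthonormal_family_inner[OF assms(1)])
  also have "\<dots> = (if l' \<le> l then c l' else 0)"
    using assms by (simp add: sum.delta')
  finally show ?thesis .
qed

lemma proj_l_in_span: "l \<le> k \<Longrightarrow> proj_l u l d \<in> span (u ` {1..k})"
  unfolding proj_l_def by (intro span_sum span_mul span_base) auto

lemma inner_proj_l:
  assumes "orthonormal_family k u" "l \<le> k" "l' \<in> {1..k}"
  shows "proj_l u l d \<bullet> u l' = (if l' \<le> l then d \<bullet> u l' else 0)"
  unfolding proj_l_def by (rule inner_sum_orthonormal[OF assms])

text \<open>The \<open>l\<close>-th residual removes the first \<open>l - 1\<close> components, as in the definition of
  \<open>k_tangent\<close>; the residual \<open>proj_residual u (Suc k)\<close> is orthogonal to all of \<open>u 1, \<dots>, u k\<close>.\<close>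

definition proj_residual :: "(nat \<Rightarrow> real^'n) \<Rightarrow> nat \<Rightarrow> real^'n \<Rightarrow> real^'n" where
  "proj_residual u l d = d - proj_l u (l - 1) d"

lemma inner_proj_residual:
  assumes "orthonormal_family k u" "l \<in> {1..k}"
  shows "proj_residual u l d \<bullet> u l = d \<bullet> u l"
proof -
  have "proj_l u (l - 1) d \<bullet> u l = 0" using assms inner_proj_l[OF assms(1), of "l - 1" l d] by auto
  then show ?thesis by (simp add: proj_residual_def inner_diff_left)
qed

lemma proj_residual_Suc:
  assumes "l \<ge> 1"
  shows "proj_residual u (Suc l) d = proj_residual u l d - (d \<bullet> u l) *\<^sub>R u l"
proof -
  obtain l0 where "l = Suc l0" using assms by (cases l) auto
  then show ?thesis by (simp add: proj_residual_def proj_l_def)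
qed

lemma norm_proj_residual_Suc_le:
  assumes "orthonormal_family k u" "l \<in> {1..k}"
  shows "norm (proj_residual u (Suc l) d) \<le> norm (proj_residual u l d)"
proof -
  define e where "e = proj_residual u l d"
  define a where "a = d \<bullet> u l"
  have ea: "e \<bullet> u l = a" unfolding e_def a_def by (rule inner_proj_residual[OF assms])
  have ul: "u l \<bullet> u l = 1" using orthonormal_family_inner[OF assms(1) assms(2) assms(2)] by simp
  have "(norm (proj_residual u (Suc l) d))\<^sup>2 = (e - a *\<^sub>R u l) \<bullet> (e - a *\<^sub>R u l)"
    using assms by (simp add: proj_residual_Suc e_def a_def power2_norm_eq_inner)
  also have "\<dots> = e \<bullet> e - 2 * a * (e \<bullet> u l) + a * a * (u l \<bullet> u l)"
    by (simp add: inner_diff_left inner_diff_right inner_commute algebra_simps)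
  also have "\<dots> = (norm e)\<^sup>2 - a\<^sup>2"
    using dot_square_norm[of e] by (simp add: ea ul power2_eq_square)
  finally have "(norm (proj_residual u (Suc l) d))\<^sup>2 \<le> (norm e)\<^sup>2" by simp
  then show ?thesis unfolding e_def by (rule power2_le_imp_le) simp
qed

lemma norm_proj_residual_antimono:
  assumes "orthonormal_family k u" "1 \<le> l" "l \<le> l'" "l' \<le> Suc k"
  shows "norm (proj_residual u l' d) \<le> norm (proj_residual u l d)"
  using assms(3,4)
proof (induction l' rule: dec_induct)
  case (step m)
  have "norm (proj_residual u (Suc m) d) \<le> norm (proj_residual u m d)"
    using assms step by (intro norm_proj_residual_Suc_le[OF assms(1)]) auto
  then show ?case using step by auto
qed simp

lemma proj_residual_nonzero:
  assumes "d \<notin> span (u ` {1..k})" "l \<le> Suc k"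
  shows "proj_residual u l d \<noteq> 0"
proof
  assume "proj_residual u l d = 0"
  then have "d = proj_l u (l - 1) d" by (simp add: proj_residual_def)
  moreover have "proj_l u (l - 1) d \<in> span (u ` {1..k})" using assms(2) by (intro proj_l_in_span) auto
  ultimately show False using assms(1) by simp
qed

locale tangent_sequence =
  fixes k :: nat and u :: "nat \<Rightarrow> real^'n" and xs :: "nat \<Rightarrow> real^'n" and x :: "real^'n"
  assumes orthonormal: "orthonormal_family k u"
    and converges: "xs \<longlonglongrightarrow> x"
    and off_span: "\<forall>i. xs i - x \<notin> span (u ` {1..k})"
    and directions: "\<forall>l\<in>{1..k}. (\<lambda>i. (1 / norm (xs i - x - proj_l u (l - 1) (xs i - x))) *\<^sub>R
                            (xs i - x - proj_l u (l - 1) (xs i - x))) \<longlonglongrightarrow> u l"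

lemma k_tangent_obtain_sequence:
  assumes "k_tangent X x k u"
  obtains xs where "\<forall>i. xs i \<in> X" "tangent_sequence k u xs x"
  using assms unfolding k_tangent_def tangent_sequence_def by blast

context tangent_sequence
begin

lemma residual_nonzero: "l \<le> Suc k \<Longrightarrow> proj_residual u l (xs i - x) \<noteq> 0"
  using off_span by (intro proj_residual_nonzero) auto

lemma normalized_residual_tendsto:
  "l \<in> {1..k} \<Longrightarrow>
    (\<lambda>i. (1 / norm (proj_residual u l (xs i - x))) *\<^sub>R proj_residual u l (xs i - x)) \<longlonglongrightarrow> u l"
  using directions by (simp add: proj_residual_def)

lemma coord_over_residual_tendsto:
  assumes l: "l \<in> {1..k}"
  shows "(\<lambda>i. ((xs i - x) \<bullet> u l) / norm (proj_residual u l (xs i - x))) \<longlonglongrightarrow> 1"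
proof -
  have "(\<lambda>i. ((1 / norm (proj_residual u l (xs i - x))) *\<^sub>R proj_residual u l (xs i - x)) \<bullet> u l)
      \<longlonglongrightarrow> u l \<bullet> u l"
    by (intro tendsto_inner normalized_residual_tendsto[OF l] tendsto_const)
  then show ?thesis
    using orthonormal_family_inner[OF orthonormal l l] by (simp add: inner_proj_residual[OF orthonormal l])
qed

lemma next_residual_over_residual_tendsto:
  assumes l: "l \<in> {1..k}"
  shows "(\<lambda>i. norm (proj_residual u (Suc l) (xs i - x)) / norm (proj_residual u l (xs i - x)))
    \<longlonglongrightarrow> 0"
proof -
  have "(\<lambda>i. (1 / norm (proj_residual u l (xs i - x))) *\<^sub>R proj_residual u l (xs i - x)
        - (((xs i - x) \<bullet> u l) / norm (proj_residual u l (xs i - x))) *\<^sub>R u l) \<longlonglongrightarrow> u l - 1 *\<^sub>R u l"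
    by (intro tendsto_diff normalized_residual_tendsto[OF l] tendsto_scaleR
        coord_over_residual_tendsto[OF l] tendsto_const)
  then have "(\<lambda>i. (1 / norm (proj_residual u l (xs i - x))) *\<^sub>R proj_residual u (Suc l) (xs i - x))
      \<longlonglongrightarrow> 0"
    using l by (simp add: proj_residual_Suc scaleR_diff_right)
  then show ?thesis
    using tendsto_norm_zero by fastforce
qed

lemma eventually_coord_pos:
  assumes l: "l \<in> {1..k}"
  shows "eventually (\<lambda>i. (xs i - x) \<bullet> u l > 0) sequentially"
  using order_tendstoD(1)[OF coord_over_residual_tendsto[OF l] zero_less_one]
  by eventually_elim (simp add: zero_less_divide_iff)

lemma residual_over_coord_tendsto:
  assumes l: "l \<in> {1..k}" and l': "l < l'" "l' \<le> Suc k"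
  shows "(\<lambda>i. norm (proj_residual u l' (xs i - x)) / ((xs i - x) \<bullet> u l)) \<longlonglongrightarrow> 0"
proof -
  have "(\<lambda>i. (norm (proj_residual u (Suc l) (xs i - x)) / norm (proj_residual u l (xs i - x)))
          / (((xs i - x) \<bullet> u l) / norm (proj_residual u l (xs i - x)))) \<longlonglongrightarrow> 0 / 1"
    by (intro tendsto_divide next_residual_over_residual_tendsto[OF l]
        coord_over_residual_tendsto[OF l]) auto
  then have next_over_coord:
    "(\<lambda>i. norm (proj_residual u (Suc l) (xs i - x)) / ((xs i - x) \<bullet> u l)) \<longlonglongrightarrow> 0"
    using residual_nonzero[of l] l by simp
  show ?thesis
  proof (rule Lim_null_comparison[OF _ next_over_coord])
    show "eventually (\<lambda>i. norm (norm (proj_residual u l' (xs i - x)) / ((xs i - x) \<bullet> u l))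
           \<le> norm (proj_residual u (Suc l) (xs i - x)) / ((xs i - x) \<bullet> u l)) sequentially"
      using eventually_coord_pos[OF l]
    proof eventually_elim
      case (elim i)
      have "norm (proj_residual u l' (xs i - x)) \<le> norm (proj_residual u (Suc l) (xs i - x))"
        using l l' by (intro norm_proj_residual_antimono[OF orthonormal]) auto
      then show ?case using elim by (simp add: divide_right_mono)
    qed
  qed
qed

lemma coord_ratio_tendsto:
  assumes l: "l \<in> {1..k}" and l': "l < l'" "l' \<le> k"
  shows "(\<lambda>i. ((xs i - x) \<bullet> u l') / ((xs i - x) \<bullet> u l)) \<longlonglongrightarrow> 0"
proof (rule Lim_null_comparison[OF _ residual_over_coord_tendsto[OF l l'(1)]])
  have l'': "l' \<in> {1..k}" using l l' by auto
  show "eventually (\<lambda>i. norm (((xs i - x) \<bullet> u l') / ((xs i - x) \<bullet> u l))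
           \<le> norm (proj_residual u l' (xs i - x)) / ((xs i - x) \<bullet> u l)) sequentially"
    using eventually_coord_pos[OF l] eventually_coord_pos[OF l'']
  proof eventually_elim
    case (elim i)
    have "(xs i - x) \<bullet> u l' = proj_residual u l' (xs i - x) \<bullet> u l'"
      using inner_proj_residual[OF orthonormal l''] by simp
    also have "\<dots> \<le> norm (proj_residual u l' (xs i - x)) * norm (u l')" by (rule norm_cauchy_schwarz)
    also have "norm (u l') = 1" using orthonormal l'' unfolding orthonormal_family_def by auto
    finally show ?case using elim by (simp add: divide_right_mono)
  qed
qed (use l' in auto)

lemma coord_tendsto_zero: "(\<lambda>i. (xs i - x) \<bullet> u l) \<longlonglongrightarrow> 0"
  using tendsto_inner[OF LIM_zero[OF converges] tendsto_const[of "u l"]] by simp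

end

section \<open>The cone \<open>C\<^sub>x\<^sub>,\<^sub>u\<^sub>,\<^sub>\<lambda>\<close>\<close>

lemma sum_scaleR_by_parts:
  fixes W :: "nat \<Rightarrow> real" and V :: "nat \<Rightarrow> 'a::real_vector"
  assumes "V 0 = 0"
  shows "(\<Sum>l\<le>K. (W l - W (Suc l)) *\<^sub>R V l)
       = (\<Sum>l=1..K. W l *\<^sub>R (V l - V (l - 1))) - W (Suc K) *\<^sub>R V K"
  by (induction K) (use assms in \<open>simp_all add: algebra_simps\<close>)

lemma Ccone_eq_convex_hull_image:
  "Ccone x k u lam = convex hull ((\<lambda>l. x + (\<Sum>j=1..l. lam j *\<^sub>R u j)) ` {..k})"
  unfolding Ccone_def by (rule arg_cong[where f="\<lambda>A. convex hull A"]) auto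

lemma inj_on_Ccone_vertices:
  assumes ON: "orthonormal_family k u" and lam: "\<forall>j\<in>{1..k}. lam j > 0"
  shows "inj_on (\<lambda>l. x + (\<Sum>j=1..l. lam j *\<^sub>R u j)) {..k}"
proof (rule inj_onI)
  fix a b assume a: "a \<in> {..k}" and b: "b \<in> {..k}"
    and "x + (\<Sum>j=1..a. lam j *\<^sub>R u j) = x + (\<Sum>j=1..b. lam j *\<^sub>R u j)"
  then have "(\<Sum>j=1..a. lam j *\<^sub>R u j) \<bullet> u (max a b) = (\<Sum>j=1..b. lam j *\<^sub>R u j) \<bullet> u (max a b)"
    by simp
  moreover have "max a b \<noteq> 0 \<Longrightarrow> lam (max a b) > 0" using a b lam by (auto simp: max_def)
  ultimately show "a = b"
    using a b inner_sum_orthonormal[OF ON, of a "max a b" lam] inner_sum_orthonormal[OF ON, of b "max a b" lam]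
    by (cases "a = b") (auto simp: max_def split: if_splits)
qed

text \<open>With \<open>W\<^sub>l = \<beta>\<^sub>l / \<lambda>\<^sub>l\<close> (and \<open>W\<^sub>0 = 1\<close>, \<open>W\<^sub>k\<^sub>+\<^sub>1 = 0\<close>), the point is the convex combination of the
  vertices with the positive weights \<open>W\<^sub>l - W\<^sub>l\<^sub>+\<^sub>1\<close> (summation by parts).\<close>

lemma Ccone_rel_interior_point:
  assumes ON: "orthonormal_family k u" and k: "k \<ge> 1"
    and lam: "\<forall>j\<in>{1..k}. lam j > 0"
    and \<beta>_pos: "\<forall>l\<in>{1..k}. \<beta> l > 0"
    and \<beta>_1: "\<beta> 1 < lam 1"
    and \<beta>_dec: "\<forall>l\<in>{1..<k}. \<beta> (Suc l) / lam (Suc l) < \<beta> l / lam l"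
  shows "x + (\<Sum>j=1..k. \<beta> j *\<^sub>R u j) \<in> rel_interior (Ccone x k u lam)"
proof -
  define V where "V l = (\<Sum>j=1..l. lam j *\<^sub>R u j)" for l
  define v where "v l = x + V l" for l
  define W where "W l = (if l = 0 then 1 else if l \<le> k then \<beta> l / lam l else 0)" for l
  define w where "w l = W l - W (Suc l)" for l
  have w_pos: "w l > 0" if lk: "l \<le> k" for l
  proof -
    consider "l = 0" | "1 \<le> l" "l < k" | "l = k" "l \<ge> 1" using lk k by linarith
    then show ?thesis
      by cases (use k \<beta>_1 \<beta>_dec \<beta>_pos lam in \<open>auto simp: w_def W_def\<close>)
  qed
  have w_sum: "(\<Sum>l\<le>k. w l) = 1" unfolding w_def sum_telescope by (simp add: W_def)
  have "(\<Sum>l\<le>k. (W l - W (Suc l)) *\<^sub>R V l) = (\<Sum>l=1..k. W l *\<^sub>R (V l - V (l - 1)))"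
    by (subst sum_scaleR_by_parts) (auto simp: V_def W_def)
  also have "\<dots> = (\<Sum>l=1..k. \<beta> l *\<^sub>R u l)"
  proof (intro sum.cong refl)
    fix l assume l: "l \<in> {1..k}"
    then obtain l0 where "l = Suc l0" by (cases l) auto
    then have "V l - V (l - 1) = lam l *\<^sub>R u l" by (simp add: V_def)
    moreover have "lam l > 0" using l lam by auto
    ultimately show "W l *\<^sub>R (V l - V (l - 1)) = \<beta> l *\<^sub>R u l" using l by (simp add: W_def)
  qed
  finally have comb: "(\<Sum>l\<le>k. w l *\<^sub>R v l) = x + (\<Sum>j=1..k. \<beta> j *\<^sub>R u j)"
    using w_sum by (simp add: v_def w_def scaleR_add_right sum.distrib flip: scaleR_sum_left)
  have inj: "inj_on v {..k}"
    unfolding v_def V_def by (rule inj_on_Ccone_vertices[OF ON lam])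
  define U where "U y = w (inv_into {..k} v y)" for y
  have Uv: "U (v l) = w l" if "l \<le> k" for l
    using inj that by (simp add: U_def inv_into_f_f)
  have "x + (\<Sum>j=1..k. \<beta> j *\<^sub>R u j) \<in> {y. \<exists>U. (\<forall>z\<in>v ` {..k}. 0 < U z) \<and>
      sum U (v ` {..k}) = 1 \<and> (\<Sum>z\<in>v ` {..k}. U z *\<^sub>R z) = y}"
    using Uv w_pos w_sum comb by (intro CollectI exI[of _ U] conjI) (auto simp: sum.reindex[OF inj])
  also have "\<dots> \<subseteq> rel_interior (convex hull (v ` {..k}))"
    by (rule explicit_subset_rel_interior_convex_hull_minimal) simp
  also have "convex hull (v ` {..k}) = Ccone x k u lam"
    unfolding Ccone_eq_convex_hull_image v_def V_def ..
  finally show ?thesis .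
qed

definition (in tangent_sequence) foot :: "nat \<Rightarrow> real^'n" where
  "foot i = x + (\<Sum>j=1..k. ((xs i - x) \<bullet> u j) *\<^sub>R u j)"

lemma (in tangent_sequence) xs_minus_foot: "xs i - foot i = proj_residual u (Suc k) (xs i - x)"
  by (simp add: foot_def proj_residual_def proj_l_def)

lemma (in tangent_sequence) foot_tendsto: "foot \<longlonglongrightarrow> x"
proof -
  have "(\<lambda>i. x + (\<Sum>j=1..k. ((xs i - x) \<bullet> u j) *\<^sub>R u j)) \<longlonglongrightarrow> x + (\<Sum>j=1..k. 0 *\<^sub>R u j)"
    by (intro tendsto_intros coord_tendsto_zero)
  then show ?thesis by (simp add: foot_def[abs_def])
qed

lemma (in tangent_sequence) eventually_foot_in_rel_interior:
  assumes k: "k \<ge> 1" and lam: "\<forall>j\<in>{1..k}. lam j > 0"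
  shows "eventually (\<lambda>i. foot i \<in> rel_interior (Ccone x k u lam)) sequentially"
proof -
  define \<alpha> where "\<alpha> j i = (xs i - x) \<bullet> u j" for j i
  have pos: "eventually (\<lambda>i. \<forall>l\<in>{1..k}. \<alpha> l i > 0) sequentially"
    by (rule eventually_ball_finite) (use eventually_coord_pos in \<open>auto simp: \<alpha>_def\<close>)
  have first: "eventually (\<lambda>i. \<alpha> 1 i < lam 1) sequentially"
    using coord_tendsto_zero[of 1] lam k unfolding \<alpha>_def by (intro order_tendstoD) auto
  have dec: "eventually (\<lambda>i. \<forall>l\<in>{1..<k}. \<alpha> (Suc l) i / lam (Suc l) < \<alpha> l i / lam l) sequentially"
  proof (rule eventually_ball_finite, simp, rule ballI)
    fix l assume l: "l \<in> {1..<k}"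
    have "eventually (\<lambda>i. \<alpha> (Suc l) i / \<alpha> l i < lam (Suc l) / lam l) sequentially"
      using coord_ratio_tendsto[of l "Suc l"] l lam unfolding \<alpha>_def
      by (intro order_tendstoD) auto
    then show "eventually (\<lambda>i. \<alpha> (Suc l) i / lam (Suc l) < \<alpha> l i / lam l) sequentially"
      using pos
    proof eventually_elim
      case (elim i)
      have "\<alpha> l i > 0" "lam l > 0" "lam (Suc l) > 0" using elim(2) l lam by auto
      then show ?case using elim(1) by (simp add: field_simps)
    qed
  qed
  show ?thesis
    using pos first dec
    unfolding foot_def
    by eventually_elim (rule Ccone_rel_interior_point[OF orthonormal k lam], auto simp: \<alpha>_def)
qed

section \<open>The gap between \<open>f\<close> and \<open>g\<close> along the tangent\<close>

lemma sum_leading_term_tendsto: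
  fixes \<alpha> :: "nat \<Rightarrow> 'a \<Rightarrow> real" and \<gamma> :: "nat \<Rightarrow> real"
  assumes nonzero: "\<And>l. l \<in> {1..k} \<Longrightarrow> eventually (\<lambda>i. \<alpha> l i \<noteq> 0) F"
    and ratio: "\<And>l l'. l \<in> {1..k} \<Longrightarrow> l < l' \<Longrightarrow> l' \<le> k \<Longrightarrow> ((\<lambda>i. \<alpha> l' i / \<alpha> l i) \<longlongrightarrow> 0) F"
    and "\<exists>j\<in>{1..k}. \<gamma> j \<noteq> 0"
  obtains l where "l \<in> {1..k}" "\<gamma> l \<noteq> 0"
    "((\<lambda>i. (\<Sum>j=1..k. \<gamma> j * \<alpha> j i) / \<alpha> l i) \<longlongrightarrow> \<gamma> l) F"
proof -
  define l where "l = (LEAST j. j \<in> {1..k} \<and> \<gamma> j \<noteq> 0)"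
  have l: "l \<in> {1..k}" "\<gamma> l \<noteq> 0"
    using LeastI_ex[of "\<lambda>j. j \<in> {1..k} \<and> \<gamma> j \<noteq> 0"] assms(3) unfolding l_def by blast+
  have below: "\<gamma> j = 0" if "j \<in> {1..k}" "j < l" for j
    using not_less_Least[of j "\<lambda>j. j \<in> {1..k} \<and> \<gamma> j \<noteq> 0"] that unfolding l_def by blast
  have "((\<lambda>i. \<Sum>j=1..k. \<gamma> j * (\<alpha> j i / \<alpha> l i)) \<longlongrightarrow> (\<Sum>j=1..k. if j = l then \<gamma> j else 0)) F"
  proof (intro tendsto_sum)
    fix j assume j: "j \<in> {1..k}"
    consider "j < l" | "j = l" | "l < j" by linarith
    then show "((\<lambda>i. \<gamma> j * (\<alpha> j i / \<alpha> l i)) \<longlongrightarrow> (if j = l then \<gamma> j else 0)) F"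
    proof cases
      case 1
      then show ?thesis using below[OF j] by simp
    next
      case 2
      have "eventually (\<lambda>i. \<gamma> j = \<gamma> j * (\<alpha> j i / \<alpha> l i)) F"
        using nonzero[OF l(1)] by eventually_elim (simp add: 2)
      then show ?thesis using 2 by (auto intro: Lim_transform_eventually[OF tendsto_const])
    next
      case 3
      then show ?thesis using tendsto_mult_right_zero[OF ratio[OF l(1) 3]] j by auto
    qed
  qed
  then have "((\<lambda>i. (\<Sum>j=1..k. \<gamma> j * \<alpha> j i) / \<alpha> l i) \<longlongrightarrow> \<gamma> l) F"
    using l(1) by (simp add: sum_divide_distrib)
  then show ?thesis using that l by blast
qed

lemma eventually_finite_cases_obtain_subfilter:
  assumes "finite P" "F \<noteq> bot" "eventually (\<lambda>i. \<exists>p\<in>P. Q p i) F"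
  obtains p G where "p \<in> P" "G \<noteq> bot" "G \<le> F" "eventually (Q p) G"
proof -
  have "frequently (\<lambda>i. \<exists>p\<in>P. Q p i) F" using assms(2,3) by (rule eventually_frequently)
  then obtain p where p: "p \<in> P" "frequently (Q p) F" using frequently_bex_finite[OF assms(1), where F=F and P="\<lambda>i p. Q p i"] by blast
  define G where "G = inf F (principal {i. Q p i})"
  have "G \<noteq> bot"
  proof
    assume "G = bot"
    then have "eventually (\<lambda>i. False) G" by simp
    then have "eventually (\<lambda>i. \<not> Q p i) F" unfolding G_def eventually_inf_principal by simp
    then show False using p(2) by (simp add: frequently_def)
  qed
  moreover have "eventually (Q p) G" by (simp add: G_def eventually_inf_principal)
  ultimately show ?thesis using that p by (simp add: G_def)
qed

lemma mcnaughton_linear_along: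
  fixes f :: "real^'n \<Rightarrow> real"
  assumes f: "mcnaughton f" and c: "c \<longlonglongrightarrow> x" and x: "x \<in> unit_cube" "f x = 0"
    and c_cube: "eventually (\<lambda>i. c i \<in> unit_cube) sequentially"
  obtains a G where "G \<noteq> bot" "G \<le> sequentially" "eventually (\<lambda>i. f (c i) = a \<bullet> (c i - x)) G"
proof -
  obtain P :: "((real^'n) \<times> real) set" where P: "finite P"
      "\<forall>y\<in>(unit_cube::(real^'n) set). \<exists>(a,b)\<in>P. f y = a \<bullet> y + b"
    and fc: "continuous_on unit_cube f"
    using f unfolding mcnaughton_def by blast
  have "eventually (\<lambda>i. \<exists>p\<in>P. f (c i) = fst p \<bullet> c i + snd p) sequentially"
    using c_cube
  proof eventually_elim
    case (elim i)
    then obtain a b where "(a,b) \<in> P" "f (c i) = a \<bullet> c i + b" using P(2) by blast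
    then show ?case by force
  qed
  then obtain p G where G: "G \<noteq> bot" "G \<le> sequentially"
    and piece: "eventually (\<lambda>i. f (c i) = fst p \<bullet> c i + snd p) G"
    by (rule eventually_finite_cases_obtain_subfilter[OF P(1) sequentially_bot])
  have "((\<lambda>i. f (c i)) \<longlongrightarrow> 0) G"
    using continuous_on_tendsto_compose[OF fc c x(1) c_cube] G(2) x(2)
    by (auto intro: tendsto_mono[rotated])
  then have "((\<lambda>i. fst p \<bullet> c i + snd p) \<longlongrightarrow> 0) G"
    by (rule Lim_transform_eventually[OF _ piece])
  moreover have "((\<lambda>i. fst p \<bullet> c i + snd p) \<longlongrightarrow> fst p \<bullet> x + snd p) G"
    by (intro tendsto_intros tendsto_mono[OF G(2) c])
  ultimately have px: "fst p \<bullet> x + snd p = 0" using tendsto_unique[OF G(1)] by blast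
  have "eventually (\<lambda>i. f (c i) = fst p \<bullet> (c i - x)) G"
    using piece by (rule eventually_mono) (use px in \<open>simp add: inner_diff_right\<close>)
  then show ?thesis using that G by blast
qed

lemma (in tangent_sequence) linear_form_along_foot_leading:
  assumes G: "G \<noteq> bot" "G \<le> sequentially"
    and pos: "eventually (\<lambda>i. 0 < a \<bullet> (foot i - x)) G"
  obtains l where "l \<in> {1..k}" "a \<bullet> u l > 0" "eventually (\<lambda>i. (xs i - x) \<bullet> u l > 0) G"
    "((\<lambda>i. a \<bullet> (foot i - x) / ((xs i - x) \<bullet> u l)) \<longlongrightarrow> a \<bullet> u l) G"
proof -
  define \<alpha> where "\<alpha> j i = (xs i - x) \<bullet> u j" for j i
  define \<gamma> where "\<gamma> j = a \<bullet> u j" for j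
  have sum: "a \<bullet> (foot i - x) = (\<Sum>j=1..k. \<gamma> j * \<alpha> j i)" for i
    by (simp add: foot_def \<gamma>_def \<alpha>_def inner_sum_right mult.commute)
  have \<alpha>_pos: "eventually (\<lambda>i. \<alpha> l i > 0) G" if "l \<in> {1..k}" for l
    using filter_leD[OF G(2) eventually_coord_pos[OF that]] by (simp add: \<alpha>_def)
  have \<alpha>_nonzero: "eventually (\<lambda>i. \<alpha> l i \<noteq> 0) G" if "l \<in> {1..k}" for l
    using \<alpha>_pos[OF that] by (auto elim: eventually_mono)
  have \<alpha>_ratio: "((\<lambda>i. \<alpha> l' i / \<alpha> l i) \<longlongrightarrow> 0) G" if "l \<in> {1..k}" "l < l'" "l' \<le> k" for l l'
    using tendsto_mono[OF G(2) coord_ratio_tendsto[OF that]] by (simp add: \<alpha>_def)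
  have \<gamma>_nonzero: "\<exists>j\<in>{1..k}. \<gamma> j \<noteq> 0"
  proof (rule ccontr)
    assume "\<not> ?thesis"
    then have "eventually (\<lambda>i. False) G" using pos by (simp add: sum)
    then show False using G(1) by simp
  qed
  obtain l where l: "l \<in> {1..k}" and \<gamma>_l: "\<gamma> l \<noteq> 0"
    and lead: "((\<lambda>i. (\<Sum>j=1..k. \<gamma> j * \<alpha> j i) / \<alpha> l i) \<longlongrightarrow> \<gamma> l) G"
    by (rule sum_leading_term_tendsto[OF \<alpha>_nonzero \<alpha>_ratio \<gamma>_nonzero])
  have "eventually (\<lambda>i. 0 \<le> (\<Sum>j=1..k. \<gamma> j * \<alpha> j i) / \<alpha> l i) G"
    using pos \<alpha>_pos[OF l] by eventually_elim (simp add: sum)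
  then have "\<gamma> l > 0" using tendsto_lowerbound[OF lead _ G(1)] \<gamma>_l by force
  then show ?thesis
    using that[OF l] \<alpha>_pos[OF l] lead by (simp add: sum \<gamma>_def \<alpha>_def)
qed

text \<open>A quantity of exact order \<open>\<alpha>\<close> beats every multiple of an error term \<open>o(\<alpha>)\<close>.\<close>

lemma eventually_dominates_error:
  fixes A R \<alpha> p q :: "'a \<Rightarrow> real"
  assumes A: "((\<lambda>i. A i / \<alpha> i) \<longlongrightarrow> \<gamma>) F" "\<gamma> > 0"
    and R: "((\<lambda>i. R i / \<alpha> i) \<longlongrightarrow> 0) F"
    and \<alpha>: "eventually (\<lambda>i. \<alpha> i > 0) F"
    and est: "eventually (\<lambda>i. A i - L * R i \<le> p i \<and> q i \<le> L * R i) F"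
  shows "eventually (\<lambda>i. real m * q i < p i) F"
proof -
  have "((\<lambda>i. A i / \<alpha> i - real (Suc m) * L * (R i / \<alpha> i)) \<longlongrightarrow> \<gamma> - real (Suc m) * L * 0) F"
    by (intro tendsto_intros A(1) R)
  then have "eventually (\<lambda>i. 0 < A i / \<alpha> i - real (Suc m) * L * (R i / \<alpha> i)) F"
    using A(2) by (intro order_tendstoD) auto
  then show ?thesis
    using \<alpha> est
  proof eventually_elim
    case (elim i)
    have "0 < (A i - real (Suc m) * L * R i) / \<alpha> i"
      using elim(1) by (simp add: diff_divide_distrib)
    then have "real m * (L * R i) + L * R i < A i"
      using elim(2) by (simp add: zero_less_divide_iff algebra_simps)
    moreover have "real m * q i \<le> real m * (L * R i)"
      using elim(3) by (simp add: mult_left_mono)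
    ultimately show ?case using elim(3) by linarith
  qed
qed

lemma mcnaughton_gap_along_tangent:
  fixes X S F :: "(real^'n) set" and f g :: "real^'n \<Rightarrow> real"
  assumes Xc: "X \<subseteq> unit_cube" and clX: "closed X"
    and tg: "k_tangent X x k u"
    and Sc: "S \<subseteq> unit_cube" and face: "F face_of S"
    and lam: "\<forall>j\<in>{1..k}. lam j > 0"
    and CS: "Ccone x k u lam \<subseteq> S" and CF: "\<not> Ccone x k u lam \<subseteq> F"
    and FX: "F \<inter> X = S \<inter> X"
    and mf: "mcnaughton f" and mg: "mcnaughton g"
    and f0: "{y \<in> unit_cube. f y = 0} = F" and g0: "{y \<in> unit_cube. g y = 0} = S"
  shows "\<exists>y\<in>X. real m * g y < f y"
proof -
  obtain xs where xsX: "\<forall>i. xs i \<in> X" and seq: "tangent_sequence k u xs x"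
    using tg by (rule k_tangent_obtain_sequence)
  interpret tangent_sequence k u xs x by (fact seq)
  have "x \<in> X" using clX xsX converges closed_sequentially by blast
  moreover have "x \<in> Ccone x k u lam" unfolding Ccone_def by (rule hull_inc) (auto intro!: exI[of _ 0])
  ultimately have xF: "x \<in> F" using CS FX by blast
  then have x: "x \<in> unit_cube" "f x = 0" using f0 by auto
  have k: "k \<ge> 1"
  proof (rule ccontr)
    assume "\<not> k \<ge> 1"
    then have "k = 0" by simp
    then have "Ccone x k u lam = {x}" unfolding Ccone_def by simp
    then show False using CF xF by simp
  qed
  have foot_SF: "eventually (\<lambda>i. foot i \<in> S - F) sequentially"
    using eventually_foot_in_rel_interior[OF k lam]
  proof eventually_elim
    case (elim i)
    have "foot i \<notin> F"
    proof
      assume "foot i \<in> F"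
      with elim have "F \<inter> rel_interior (Ccone x k u lam) \<noteq> {}" by blast
      then show False using subset_of_face_of[OF face CS] CF by blast
    qed
    moreover have "foot i \<in> S" using elim rel_interior_subset CS by blast
    ultimately show ?case by blast
  qed
  then have foot_cube: "eventually (\<lambda>i. foot i \<in> unit_cube) sequentially"
    using Sc by (auto elim: eventually_mono)
  have f_foot_pos: "eventually (\<lambda>i. f (foot i) > 0) sequentially"
    using foot_SF by eventually_elim (use Sc f0 mcnaughton_range[OF mf] in force)
  obtain Lf where Lf: "\<And>y z. y \<in> unit_cube \<Longrightarrow> z \<in> unit_cube \<Longrightarrow> \<bar>f y - f z\<bar> \<le> Lf * norm (y - z)"
    using mcnaughton_lipschitz[OF mf] by blast
  obtain Lg where Lg: "\<And>y z. y \<in> unit_cube \<Longrightarrow> z \<in> unit_cube \<Longrightarrow> \<bar>g y - g z\<bar> \<le> Lg * norm (y - z)"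
    using mcnaughton_lipschitz[OF mg] by blast
  define L where "L = max Lf Lg"
  have near: "eventually (\<lambda>i. f (foot i) - L * norm (xs i - foot i) \<le> f (xs i)
      \<and> g (xs i) \<le> L * norm (xs i - foot i)) sequentially"
    using foot_SF
  proof eventually_elim
    case (elim i)
    have cube: "xs i \<in> unit_cube" "foot i \<in> unit_cube" using xsX Xc elim Sc by auto
    have "g (foot i) = 0" using elim Sc g0 by blast
    moreover have "Lf * norm (xs i - foot i) \<le> L * norm (xs i - foot i)"
      "Lg * norm (xs i - foot i) \<le> L * norm (xs i - foot i)"
      by (auto simp: L_def intro!: mult_right_mono)
    ultimately show ?case using Lf[OF cube] Lg[OF cube] by auto
  qed
  obtain a G where G: "G \<noteq> bot" "G \<le> sequentially"
    and f_lin: "eventually (\<lambda>i. f (foot i) = a \<bullet> (foot i - x)) G"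
    by (rule mcnaughton_linear_along[OF mf foot_tendsto x foot_cube])
  have "eventually (\<lambda>i. 0 < a \<bullet> (foot i - x)) G"
    using f_lin filter_leD[OF G(2) f_foot_pos] by eventually_elim simp
  then obtain l where l: "l \<in> {1..k}" "a \<bullet> u l > 0"
    and coord_pos: "eventually (\<lambda>i. (xs i - x) \<bullet> u l > 0) G"
    and lead: "((\<lambda>i. a \<bullet> (foot i - x) / ((xs i - x) \<bullet> u l)) \<longlongrightarrow> a \<bullet> u l) G"
    by (rule linear_form_along_foot_leading[OF G])
  have "((\<lambda>i. f (foot i) / ((xs i - x) \<bullet> u l)) \<longlongrightarrow> a \<bullet> u l) G"
    by (rule Lim_transform_eventually[OF lead]) (use f_lin in \<open>auto elim: eventually_mono\<close>)
  moreover have "((\<lambda>i. norm (xs i - foot i) / ((xs i - x) \<bullet> u l)) \<longlongrightarrow> 0) G"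
    using tendsto_mono[OF G(2) residual_over_coord_tendsto[OF l(1), of "Suc k"]] l(1)
    by (simp add: xs_minus_foot)
  ultimately have "eventually (\<lambda>i. real m * g (xs i) < f (xs i)) G"
    by (rule eventually_dominates_error[OF _ l(2) _ coord_pos filter_leD[OF G(2) near]])
  then obtain i where "real m * g (xs i) < f (xs i)" using eventually_happens'[OF G(1)] by blast
  then show ?thesis using xsX by blast
qed

section \<open>Maximal ideals and strong semisimplicity\<close>

lemma mv_ideal_adjoin:
  assumes J: "mv_ideal X J" and f_nonneg: "\<forall>y\<in>X. 0 \<le> f y"
  shows "mv_ideal X {b \<in> MX X. \<exists>j\<in>J. \<exists>m::nat. \<forall>y\<in>X. b y \<le> j y + m * f y}"
  (is "mv_ideal X ?J'")
  unfolding mv_ideal_def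
proof (intro conjI ballI impI)
  show "?J' \<subseteq> MX X" by blast
  show "(\<lambda>y. 0) \<in> ?J'"
    using J MX_zero f_nonneg unfolding mv_ideal_def by (auto intro!: bexI[of _ "\<lambda>y. 0"])
next
  fix c b assume "c \<in> ?J'" "b \<in> MX X" "\<forall>y\<in>X. b y \<le> c y"
  then show "b \<in> ?J'" by (fastforce intro: order_trans)
next
  fix c b assume c: "c \<in> ?J'" and b: "b \<in> ?J'"
  obtain j1 and m1 :: nat where j1: "j1 \<in> J" "\<forall>y\<in>X. c y \<le> j1 y + m1 * f y"
    using c by blast
  obtain j2 and m2 :: nat where j2: "j2 \<in> J" "\<forall>y\<in>X. b y \<le> j2 y + m2 * f y"
    using b by blast
  have "\<forall>y\<in>X. mv_oplus c b y \<le> mv_oplus j1 j2 y + (m1 + m2) * f y"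
  proof
    fix y assume y: "y \<in> X"
    have "c y + b y \<le> j1 y + j2 y + (m1 + m2) * f y"
      using j1(2) j2(2) y by (simp add: distrib_right) (smt (verit))
    then show "mv_oplus c b y \<le> mv_oplus j1 j2 y + (m1 + m2) * f y"
      using f_nonneg y unfolding mv_oplus_def by (smt (verit) of_nat_0_le_iff mult_nonneg_nonneg)
  qed
  moreover have "mv_oplus j1 j2 \<in> J" using J j1(1) j2(1) unfolding mv_ideal_def by blast
  ultimately show "mv_oplus c b \<in> ?J'" using MX_mv_oplus c b by blast
qed

lemma mv_ideal_eq_MX_if_ge_one:
  assumes "X \<subseteq> unit_cube" "mv_ideal X J" "t \<in> J" "\<forall>y\<in>X. 1 \<le> t y"
  shows "J = MX X"
proof
  show "J \<subseteq> MX X" using assms(2) by (simp add: mv_ideal_def)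
  show "MX X \<subseteq> J"
  proof
    fix b assume b: "b \<in> MX X"
    have "\<forall>y\<in>X. b y \<le> t y" using MX_range[OF assms(1) b] assms(4) by (auto intro: order_trans)
    then show "b \<in> J" using assms(2,3) b unfolding mv_ideal_def by blast
  qed
qed

text \<open>On the compact set where \<open>h \<le> 1/2\<close> the function \<open>g\<close> is bounded below by some \<open>\<delta> > 0\<close>,
  so \<open>2 h|\<^sub>X \<oplus> N g|\<^sub>X \<ge> 1\<close> once \<open>N \<delta> \<ge> 1\<close>.\<close>

lemma mv_ideal_eq_MX_if_cover:
  assumes Xc: "X \<subseteq> unit_cube" and clX: "closed X" and J: "mv_ideal X J"
    and mh: "mcnaughton h" and hJ: "restr X h \<in> J"
    and mg: "mcnaughton g" and gJ: "restr X g \<in> J"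
    and cover: "\<forall>y\<in>X. 1 \<le> h y + m * f y"
    and zeros: "\<forall>y\<in>X. g y = 0 \<longrightarrow> f y = 0"
  shows "J = MX X"
proof -
  define K where "K = {y \<in> X. h y \<le> 1/2}"
  have "closed K"
    unfolding K_def using mh Xc clX unfolding mcnaughton_def
    by (intro continuous_on_closed_Collect_le continuous_on_const) (auto intro: continuous_on_subset)
  moreover have "K \<subseteq> cbox 0 1" using Xc unfolding K_def unit_cube_def by blast
  then have "bounded K" by (rule bounded_subset[OF bounded_cbox])
  ultimately have "compact K" by (simp add: compact_eq_bounded_closed)
  have g_pos: "g y > 0" if "y \<in> K" for y
    using that cover zeros mcnaughton_range[OF mg] Xc unfolding K_def by fastforce
  obtain \<delta> where \<delta>: "\<delta> > 0" "\<forall>y\<in>K. \<delta> \<le> g y"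
  proof (cases "K = {}")
    case True then show ?thesis using that[of 1] by auto
  next
    case False
    have "continuous_on K g"
      using mg Xc unfolding mcnaughton_def K_def by (auto intro: continuous_on_subset)
    then obtain y0 where "y0 \<in> K" "\<forall>y\<in>K. g y0 \<le> g y"
      using continuous_attains_inf[OF \<open>compact K\<close> False] by blast
    then show ?thesis using that[of "g y0"] g_pos by auto
  qed
  obtain N :: nat where "1 / \<delta> \<le> real N" using real_arch_simple by blast
  then have N: "1 \<le> real N * \<delta>" using \<delta>(1) by (simp add: field_simps)
  define t where "t = mv_oplus (mv_oplus (restr X h) (restr X h)) (mv_mult N (restr X g))"
  have "t \<in> J"
    using J hJ mv_ideal_mv_mult[OF J gJ] unfolding t_def mv_ideal_def by blast
  moreover have "1 \<le> t y" if y: "y \<in> X" for y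
  proof (cases "h y \<le> 1/2")
    case True
    then have "\<delta> \<le> g y" using \<delta>(2) y by (simp add: K_def)
    then have "real N * \<delta> \<le> real N * g y" by (rule mult_left_mono) simp
    then have "1 \<le> real N * g y" using N by linarith
    then show ?thesis
      using y mcnaughton_range[OF mh] mcnaughton_range[OF mg] Xc
      by (auto simp: t_def mv_oplus_def restr_def mv_mult_nonneg)
  next
    case False
    then show ?thesis
      using y mcnaughton_range[OF mg] Xc by (auto simp: t_def mv_oplus_def restr_def mv_mult_nonneg)
  qed
  ultimately show ?thesis using mv_ideal_eq_MX_if_ge_one[OF Xc J] by blast
qed

lemma maximal_mv_ideal_zero_set_mono:
  assumes Xc: "X \<subseteq> unit_cube" and clX: "closed X" and max: "maximal_mv_ideal X J"
    and mf: "mcnaughton f" and mg: "mcnaughton g" and gJ: "restr X g \<in> J"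
    and zeros: "\<forall>y\<in>X. g y = 0 \<longrightarrow> f y = 0"
  shows "restr X f \<in> J"
proof (rule ccontr)
  assume f_notin: "restr X f \<notin> J"
  have J: "mv_ideal X J" "J \<noteq> MX X"
    and J_max: "\<And>J'. mv_ideal X J' \<Longrightarrow> J \<subseteq> J' \<Longrightarrow> J' = J \<or> J' = MX X"
    using max unfolding maximal_mv_ideal_def by auto
  define J' where "J' = {b \<in> MX X. \<exists>j\<in>J. \<exists>m::nat. \<forall>y\<in>X. b y \<le> j y + m * f y}"
  have "mv_ideal X J'"
    unfolding J'_def using J(1) mcnaughton_range[OF mf] Xc by (intro mv_ideal_adjoin) auto
  moreover have "J \<subseteq> J'"
    using J(1) unfolding J'_def mv_ideal_def by (auto intro!: exI[of _ "0::nat"])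
  moreover have "restr X f \<in> J'"
    using J(1) restr_in_MX[OF mf] mcnaughton_range[OF mg] Xc
    unfolding J'_def mv_ideal_def by (auto intro!: bexI[of _ "\<lambda>y. 0"] exI[of _ "1::nat"] simp: restr_def)
  ultimately have "J' = MX X" using J_max f_notin by blast
  then have "restr X (\<lambda>y. 1) \<in> J'" by (auto intro!: restr_in_MX mcnaughton_const)
  then obtain j m where j: "j \<in> J" "\<forall>y\<in>X. 1 \<le> j y + real m * f y"
    unfolding J'_def by (auto simp: restr_def)
  moreover obtain h where "mcnaughton h" "j = restr X h"
    using J(1) j(1) unfolding mv_ideal_def MX_def by blast
  ultimately have "J = MX X"
    using mv_ideal_eq_MX_if_cover[OF Xc clX J(1) _ _ mg gJ _ zeros] by (auto simp: restr_def)
  with J(2) show False by simp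
qed

lemma not_strongly_semisimple_if_zero_set_mono:
  assumes Xc: "X \<subseteq> unit_cube" and clX: "closed X"
    and mf: "mcnaughton f" and mg: "mcnaughton g"
    and zeros: "\<forall>y\<in>X. g y = 0 \<longrightarrow> f y = 0"
    and f_notin: "restr X f \<notin> principal_ideal X (restr X g)"
  shows "\<not> strongly_semisimple X"
proof
  assume "strongly_semisimple X"
  then obtain \<M> where max: "\<forall>J\<in>\<M>. maximal_mv_ideal X J"
    and eq: "principal_ideal X (restr X g) = MX X \<inter> \<Inter>\<M>"
    using restr_in_MX[OF mg] unfolding strongly_semisimple_def by meson
  have "restr X g \<in> principal_ideal X (restr X g)"
    unfolding principal_ideal_def using restr_in_MX[OF mg] mcnaughton_range[OF mg] Xc
    by (auto intro!: exI[of _ "1::nat"] simp: mv_oplus_def restr_def)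
  then have "restr X f \<in> J" if "J \<in> \<M>" for J
    using maximal_mv_ideal_zero_set_mono[OF Xc clX _ mf mg _ zeros] max eq that by blast
  then have "restr X f \<in> principal_ideal X (restr X g)" using eq restr_in_MX[OF mf] by blast
  with f_notin show False ..
qed

text \<open>The hypothesis that \<open>S\<close> is a rational simplex is what guarantees that such \<open>f\<close> and \<open>g\<close>
  exist.\<close>

theorem mainTheorem6:
  fixes X S F :: "(real^'n) set" and x :: "real^'n" and k :: nat
    and u :: "nat \<Rightarrow> real^'n" and lam :: "nat \<Rightarrow> real"
    and f g :: "real^'n \<Rightarrow> real"
  assumes "X \<subseteq> unit_cube" and "closed X"
    and "k_tangent X x k u"
    and "rational_simplex S" and "S \<subseteq> unit_cube" and "F face_of S"
    and "\<forall>j\<in>{1..k}. lam j > 0"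
    and "Ccone x k u lam \<subseteq> S" and "\<not> Ccone x k u lam \<subseteq> F"
    and "F \<inter> X = S \<inter> X"
    and "mcnaughton f" and "mcnaughton g"
    and "{y \<in> unit_cube. f y = 0} = F" and "{y \<in> unit_cube. g y = 0} = S"
  shows "{y \<in> X. restr X f y = 0} = {y \<in> X. restr X g y = 0}
    \<and> (\<forall>z\<in>X. restr X f \<in> {h \<in> MX X. h z = 0} \<longleftrightarrow> restr X g \<in> {h \<in> MX X. h z = 0})
    \<and> restr X f \<notin> principal_ideal X (restr X g)
    \<and> \<not> (\<exists>m::nat. m > 0 \<and> (\<forall>y\<in>X. restr X f y \<le> mv_mult m (restr X g) y))
    \<and> \<not> strongly_semisimple X"
proof -
  have same_zeros: "\<forall>y\<in>X. f y = 0 \<longleftrightarrow> g y = 0"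
    using assms(1,10,13,14) by blast
  have no_bound: "\<not> (\<exists>m::nat. m > 0 \<and> (\<forall>y\<in>X. restr X f y \<le> mv_mult m (restr X g) y))"
  proof
    assume "\<exists>m::nat. m > 0 \<and> (\<forall>y\<in>X. restr X f y \<le> mv_mult m (restr X g) y)"
    then obtain m where bound: "\<forall>y\<in>X. restr X f y \<le> mv_mult m (restr X g) y" by blast
    obtain y where y: "y \<in> X" "real m * g y < f y"
      using mcnaughton_gap_along_tangent[OF assms(1-3,5-14)] by blast
    have "mv_mult m (restr X g) y \<le> real m * g y"
      using y(1) assms(1) mcnaughton_range[OF assms(12)] by (auto simp: mv_mult_nonneg restr_def)
    then show False using bound y by (force simp: restr_def)
  qed
  then have f_notin: "restr X f \<notin> principal_ideal X (restr X g)"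
    unfolding principal_ideal_def by blast
  show ?thesis
    using same_zeros no_bound f_notin restr_in_MX[OF assms(11)] restr_in_MX[OF assms(12)]
      not_strongly_semisimple_if_zero_set_mono[OF assms(1,2,11,12) _ f_notin]
    by (auto simp: restr_def)
qed

end
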